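(* Let $n \geq 1$ be a real number. Then for every complex number $z$ with $|z - 1/2| \leq 1/2$ we have $|z^n - 1| \geq |z - 1|$. Moreover, if $n > 1$ and $z \neq 0, 1$ (with $|z-1/2|\le 1/2$), then the inequality is strict: $|z^n - 1| > |z-1|$.
   Context: For real non-integer $n$, $z^n$ denotes the principal branch $z^n = e^{n \log z}$ with $\log$ the principal logarithm (argument in $(-\pi,\pi]$), and $0^n = 0$. *)

theory Defs
  imports "HOL-Analysis.Analysis"
begin

end

theory Submission
  imports Defs
begin

text \<open>
  Write z = r e^(i\<theta>). The disk condition reads r \<le> cos \<theta>, so |\<theta>| < \<pi>/2, and with
  s = r^n \<le> r and c = cos \<theta>,
    |z^n - 1|^2 - |z - 1|^2 = (r - s)(2c - r - s) + 2s(c - cos n\<theta>).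
  Both terms are nonnegative unless cos n\<theta> > cos \<theta>. That forces n\<theta> beyond 2\<pi> - \<theta>, so the
  exponent is large and s \<le> r c^(n-1) is small; then the first term, of size about r c, beats
  the second, which is at least -2 r c^(n-1) (1 - c).
\<close>

lemma cos_ge_quadratic: "1 - x\<^sup>2/2 \<le> cos (x::real)"
proof -
  let ?f = "\<lambda>x. cos x - 1 + x\<^sup>2/2"
  have "?f 0 \<le> ?f \<bar>x\<bar>"
  proof (rule DERIV_nonneg_imp_nondecreasing[where f = ?f])
    fix u :: real assume "0 \<le> u"
    have "DERIV ?f u :> u - sin u"
      by (auto intro!: derivative_eq_intros simp: power2_eq_square)
    with sin_x_le_x[OF \<open>0 \<le> u\<close>] show "\<exists>y. DERIV ?f u :> y \<and> y \<ge> 0" by auto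
  qed simp
  then show ?thesis by simp
qed

lemma sin_ge_cubic: "0 \<le> x \<Longrightarrow> x - x^3/6 \<le> sin (x::real)"
proof -
  let ?f = "\<lambda>x. sin x - x + x^3/6"
  assume "0 \<le> x"
  then have "?f 0 \<le> ?f x"
  proof (rule DERIV_nonneg_imp_nondecreasing[where f = ?f])
    fix u :: real
    have "DERIV ?f u :> cos u - 1 + u\<^sup>2/2"
      by (auto intro!: derivative_eq_intros simp: power2_eq_square)
    with cos_ge_quadratic[of u] show "\<exists>y. DERIV ?f u :> y \<and> y \<ge> 0" by auto
  qed
  then show ?thesis by simp
qed

lemma cos_le_quartic: "cos (x::real) \<le> 1 - x\<^sup>2/2 + x^4/24"
proof -
  let ?f = "\<lambda>x. 1 - x\<^sup>2/2 + x^4/24 - cos x"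
  have "?f 0 \<le> ?f \<bar>x\<bar>"
  proof (rule DERIV_nonneg_imp_nondecreasing[where f = ?f])
    fix u :: real assume "0 \<le> u"
    have "DERIV ?f u :> sin u - u + u^3/6"
      by (auto intro!: derivative_eq_intros simp: power2_eq_square power3_eq_cube field_simps)
    with sin_ge_cubic[OF \<open>0 \<le> u\<close>] show "\<exists>y. DERIV ?f u :> y \<and> y \<ge> 0" by auto
  qed simp
  then show ?thesis by (simp add: power4_eq_xxxx)
qed

lemma powr_ge_bernoulli:
  fixes y k :: real
  assumes "0 < y" "1 \<le> k"
  shows "1 + k * (y - 1) \<le> y powr k"
proof -
  have "k * (y - 1) \<le> y powr k - 1 powr k"
    by (rule convex_on_imp_above_tangent[where A = "{0<..}"])
       (use assms in \<open>auto intro!: powr_convex derivative_eq_intros simp: interior_open\<close>)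
  then show ?thesis by simp
qed

lemma two_pi_lt_of_cos_mult_gt:
  fixes n \<phi> :: real
  assumes "1 \<le> n" "0 \<le> \<phi>" "\<phi> \<le> pi" "cos \<phi> < cos (n * \<phi>)"
  shows "2 * pi < (n + 1) * \<phi>"
proof (rule ccontr)
  assume "\<not> ?thesis"
  then have wrap: "n * \<phi> \<le> 2 * pi - \<phi>" by (simp add: algebra_simps)
  have "\<phi> \<le> n * \<phi>" using mult_right_mono[of 1 n \<phi>] assms by simp
  show False
  proof (cases "n * \<phi> \<le> pi")
    case True
    then show False using cos_monotone_0_pi_le[OF \<open>0 \<le> \<phi>\<close> \<open>\<phi> \<le> n * \<phi>\<close>] assms by simp
  next
    case False
    have "cos (n * \<phi>) = cos (2 * pi - n * \<phi>)" by (simp add: cos_diff)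
    also have "\<dots> \<le> cos \<phi>" using False wrap assms by (intro cos_monotone_0_pi_le) auto
    finally show False using assms by simp
  qed
qed

lemma one_minus_cos_scaled_gt_two:
  fixes k \<phi> :: real
  assumes "0 < \<phi>" "\<phi> < pi/3" "2 * pi - 2 * \<phi> < k * \<phi>"
  shows "2 < k * (k - 2) * (1 - cos \<phi>)"
proof -
  have "\<phi> < 4/3" using assms pi_less_4 by simp
  then have "\<phi>\<^sup>2 \<le> (4/3)\<^sup>2" using assms by (intro power_mono) auto
  then have "\<phi>\<^sup>2 \<le> 16/9" by (simp add: power_divide)
  then have "\<phi>\<^sup>2 * (2/5) \<le> \<phi>\<^sup>2 * (1/2 - \<phi>\<^sup>2/24)" by (intro mult_left_mono) auto
  then have "2/5 * \<phi>\<^sup>2 \<le> \<phi>\<^sup>2/2 - \<phi>^4/24" by (simp add: power4_eq_xxxx power2_eq_square algebra_simps)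
  with cos_le_quartic[of \<phi>] have deficit: "2/5 * \<phi>\<^sup>2 \<le> 1 - cos \<phi>" by linarith
  have "4 * pi/3 < k * \<phi>" "2 * pi/3 < (k - 2) * \<phi>" using assms by (simp_all add: algebra_simps)
  moreover have "2 * \<phi> < k * \<phi>" using assms by linarith
  then have "2 < k" using assms by simp
  ultimately have "(4 * pi/3) * (2 * pi/3) < (k * \<phi>) * ((k - 2) * \<phi>)"
    using pi_gt3 by (intro mult_strict_mono) auto
  moreover have "8 < (4 * pi/3) * (2 * pi/3)"
    using mult_strict_mono[of 3 pi 3 pi] pi_gt3 by simp
  ultimately have "8 < k * (k - 2) * \<phi>\<^sup>2" by (simp add: power2_eq_square algebra_simps)
  moreover have "k * (k - 2) * (2/5 * \<phi>\<^sup>2) \<le> k * (k - 2) * (1 - cos \<phi>)"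
    using deficit \<open>2 < k\<close> by (intro mult_left_mono) auto
  ultimately show ?thesis by linarith
qed

lemma quadratic_gap_of_le_square:
  fixes c d :: real
  assumes "0 < c" "c \<le> 1/2" "0 \<le> d" "d \<le> c\<^sup>2"
  shows "2 * d * (1 - c) < c * (1 - d)\<^sup>2"
proof -
  have "c\<^sup>2 \<le> 1/4" using power_mono[of c "1/2" 2] assms by (simp add: power_divide)
  then have "3/4 \<le> 1 - d" using assms by simp
  then have "(3/4)\<^sup>2 \<le> (1 - d)\<^sup>2" by (intro power_mono) auto
  then have "c * (9/16) \<le> c * (1 - d)\<^sup>2" using assms by (simp add: power_divide)
  moreover have "2 * c * (1 - c) \<le> 1/2"
    using zero_le_power2[of "c - 1/2"] by (simp add: power2_eq_square algebra_simps)
  then have "2 * c\<^sup>2 * (1 - c) < c * (9/16)"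
    using assms mult_left_mono[of "2 * c * (1 - c)" "1/2" c] by (simp add: power2_eq_square algebra_simps)
  moreover have "2 * d * (1 - c) \<le> 2 * c\<^sup>2 * (1 - c)" using assms by (simp add: mult_right_mono)
  ultimately show ?thesis by linarith
qed

lemma quadratic_gap_of_bernoulli:
  fixes c d k :: real
  assumes "0 < c" "c < 1" "0 \<le> d" "0 \<le> k"
    and bound: "d * (c + k * (1 - c)) \<le> c" and large: "2 < k * (k - 2) * (1 - c)"
  shows "2 * d * (1 - c) < c * (1 - d)\<^sup>2"
proof -
  define a where "a = 1 - c"
  define q where "q = c + k * a"
  have "0 < a" "0 < q" using assms unfolding a_def q_def by (simp_all add: add_pos_nonneg)
  txt \<open>The claim only gets harder as d grows, so it suffices to check it at d = c / q.\<close>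
  have "d \<le> c / q" using bound \<open>0 < q\<close> unfolding q_def a_def by (simp add: field_simps)
  then have "k * a / q \<le> 1 - d" using \<open>0 < q\<close> unfolding q_def by (simp add: field_simps)
  then have "(k * a / q)\<^sup>2 \<le> (1 - d)\<^sup>2" using \<open>0 < a\<close> \<open>0 < q\<close> assms by (intro power_mono) auto
  have "2 * d * a \<le> 2 * a * c / q"
    using mult_left_mono[OF \<open>d \<le> c / q\<close>, of "2 * a"] \<open>0 < a\<close> by (simp add: mult_ac)
  also have "\<dots> < c * (k * a / q)\<^sup>2"
  proof -
    have "2 * c + 2 * k * a < k * k * a" using large assms unfolding a_def by (simp add: algebra_simps)
    then have "2 * q < k * k * a" unfolding q_def by simp
    then have "(a * c / q\<^sup>2) * (2 * q) < (a * c / q\<^sup>2) * (k * k * a)"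
      using \<open>0 < a\<close> \<open>0 < q\<close> assms by (intro mult_strict_left_mono) auto
    then show ?thesis using \<open>0 < q\<close> by (simp add: power2_eq_square field_simps)
  qed
  also have "\<dots> \<le> c * (1 - d)\<^sup>2" using \<open>(k * a / q)\<^sup>2 \<le> (1 - d)\<^sup>2\<close> assms by simp
  finally show ?thesis unfolding a_def .
qed

lemma cos_powr_gap:
  fixes \<phi> k :: real
  assumes "0 < \<phi>" "\<phi> < pi/2" "2 * pi - 2 * \<phi> < k * \<phi>"
  shows "2 * cos \<phi> powr k * (1 - cos \<phi>) < cos \<phi> * (1 - cos \<phi> powr k)\<^sup>2"
proof -
  define c where "c = cos \<phi>"
  define d where "d = c powr k"
  have "0 < c" "c < 1" unfolding c_def using assms cos_monotone_0_pi[of 0 \<phi>] by (auto intro: cos_gt_zero)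
  have "2 * \<phi> < k * \<phi>" using assms by linarith
  then have "2 < k" using assms by simp
  have "0 < d" unfolding d_def using \<open>0 < c\<close> by simp
  txt \<open>For small c the crude bound d \<le> c^2 suffices; otherwise \<phi> < \<pi>/3, and Bernoulli's
    inequality for 1/c bounds d by a quantity that decays like 1/k.\<close>
  show ?thesis
  proof (cases "c \<le> 1/2")
    case True
    have "d \<le> c powr 2" unfolding d_def using \<open>2 < k\<close> \<open>0 < c\<close> \<open>c < 1\<close> by (intro powr_mono') auto
    then have "d \<le> c\<^sup>2" using \<open>0 < c\<close> by (simp add: powr_realpow)
    then show ?thesis using quadratic_gap_of_le_square[OF \<open>0 < c\<close> True] \<open>0 < d\<close> unfolding c_def d_def by simp
  next
    case False
    have "\<phi> < pi/3"
    proof (rule ccontr)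
      assume "\<not> \<phi> < pi/3"
      then have "c \<le> cos (pi/3)" unfolding c_def using assms by (intro cos_monotone_0_pi_le) auto
      then show False using False by (simp add: cos_60)
    qed
    have "1 + k * (1/c - 1) \<le> (1/c) powr k" using \<open>0 < c\<close> \<open>2 < k\<close> by (intro powr_ge_bernoulli) auto
    also have "\<dots> = 1/d" unfolding d_def using \<open>0 < c\<close> by (simp add: powr_divide)
    finally have "d * (c + k * (1 - c)) \<le> c" using \<open>0 < c\<close> \<open>0 < d\<close> by (simp add: field_simps)
    moreover have "2 < k * (k - 2) * (1 - c)"
      unfolding c_def using one_minus_cos_scaled_gt_two[OF \<open>0 < \<phi>\<close> \<open>\<phi> < pi/3\<close>] assms by simp
    ultimately show ?thesis using quadratic_gap_of_bernoulli[OF \<open>0 < c\<close> \<open>c < 1\<close>, of d k] \<open>0 < d\<close> \<open>2 < k\<close>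
      unfolding c_def d_def by simp
  qed
qed

lemma polar_gap_decomposition:
  fixes r s c t :: real
  shows "(s\<^sup>2 - 2 * s * t) - (r\<^sup>2 - 2 * r * c) = (r - s) * (2 * c - r - s) + 2 * s * (c - t)"
  by (simp add: power2_eq_square algebra_simps)

lemma polar_gap_of_cos_mult_gt:
  fixes r \<phi> n :: real
  assumes "0 < r" "r \<le> cos \<phi>" "0 \<le> \<phi>" "\<phi> < pi/2" "1 \<le> n" "cos \<phi> < cos (n * \<phi>)"
  shows "r\<^sup>2 - 2 * r * cos \<phi> < (r powr n)\<^sup>2 - 2 * r powr n * cos (n * \<phi>)"
proof -
  define c where "c = cos \<phi>"
  define k where "k = n - 1"
  define d where "d = c powr k"
  define s where "s = r powr n"
  have "0 < \<phi>" using assms by (cases "\<phi> = 0") auto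
  have "0 < c" "c < 1" unfolding c_def using assms \<open>0 < \<phi>\<close> cos_monotone_0_pi[of 0 \<phi>] by auto
  have "2 * pi < (n + 1) * \<phi>" using two_pi_lt_of_cos_mult_gt assms by simp
  then have wraps: "2 * pi - 2 * \<phi> < k * \<phi>" unfolding k_def by (simp add: algebra_simps)
  then have "0 < k * \<phi>" using assms by linarith
  then have "0 < k" using \<open>0 < \<phi>\<close> by (simp add: zero_less_mult_iff)
  have gap: "2 * d * (1 - c) < c * (1 - d)\<^sup>2"
    using cos_powr_gap[OF \<open>0 < \<phi>\<close> \<open>\<phi> < pi/2\<close> wraps] unfolding c_def d_def by simp
  have "0 < d" "d < 1" unfolding d_def using \<open>0 < c\<close> \<open>c < 1\<close> \<open>0 < k\<close> powr_less_mono2[of k c 1] by auto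
  have "s = r * r powr k" unfolding s_def k_def using \<open>0 < r\<close> powr_add[of r 1 "n - 1"] by simp
  moreover have "r powr k \<le> d" unfolding d_def c_def using assms \<open>0 < k\<close> by (intro powr_mono2) auto
  ultimately have "s \<le> r * d" using \<open>0 < r\<close> by simp
  also have "\<dots> \<le> r" using \<open>0 < r\<close> \<open>d < 1\<close> by simp
  finally have "s \<le> r" .
  have "r * (1 - d) * (c * (1 - d)) \<le> (r - s) * (2 * c - r - s)"
  proof (rule mult_mono)
    show "r * (1 - d) \<le> r - s" using \<open>s \<le> r * d\<close> by (simp add: algebra_simps)
    have "r * d \<le> c * d" using assms \<open>0 < d\<close> unfolding c_def by simp
    then show "c * (1 - d) \<le> 2 * c - r - s" using \<open>s \<le> r * d\<close> assms unfolding c_def by (simp add: algebra_simps)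
  qed (use \<open>0 < r\<close> \<open>0 < c\<close> \<open>d < 1\<close> \<open>s \<le> r\<close> in auto)
  moreover have "2 * (r * d) * (c - 1) \<le> 2 * s * (c - cos (n * \<phi>))"
  proof -
    have "2 * (r * d) * (c - 1) \<le> 2 * s * (c - 1)"
      using \<open>s \<le> r * d\<close> \<open>c < 1\<close> by (simp add: mult_right_mono_neg)
    also have "\<dots> \<le> 2 * s * (c - cos (n * \<phi>))" unfolding s_def by (simp add: mult_left_mono)
    finally show ?thesis .
  qed
  moreover have "0 < r * (c * (1 - d)\<^sup>2 - 2 * d * (1 - c))" using gap \<open>0 < r\<close> by simp
  ultimately have "0 < (r - s) * (2 * c - r - s) + 2 * s * (c - cos (n * \<phi>))"
    by (simp add: power2_eq_square algebra_simps)
  then show ?thesis using polar_gap_decomposition[of s "cos (n * \<phi>)" r c] unfolding s_def c_def by simp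
qed

lemma polar_gap:
  fixes r \<theta> n :: real
  assumes "0 < r" "r \<le> cos \<theta>" "\<bar>\<theta>\<bar> \<le> pi" "1 \<le> n"
  shows "r\<^sup>2 - 2 * r * cos \<theta> \<le> (r powr n)\<^sup>2 - 2 * r powr n * cos (n * \<theta>)"
    and "1 < n \<Longrightarrow> r < 1 \<Longrightarrow> r\<^sup>2 - 2 * r * cos \<theta> < (r powr n)\<^sup>2 - 2 * r powr n * cos (n * \<theta>)"
proof -
  define \<phi> where "\<phi> = \<bar>\<theta>\<bar>"
  define c where "c = cos \<phi>"
  define s where "s = r powr n"
  have c: "c = cos \<theta>" and cn: "cos (n * \<phi>) = cos (n * \<theta>)"
    unfolding c_def \<phi>_def using cos_abs_real[of "n * \<theta>"] assms by (simp_all add: abs_mult)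
  have "\<phi> < pi/2"
  proof (rule ccontr)
    assume "\<not> \<phi> < pi/2"
    then have "c \<le> cos (pi/2)" unfolding c_def \<phi>_def using assms by (intro cos_monotone_0_pi_le) auto
    then show False using assms c by simp
  qed
  have "r \<le> 1" using assms cos_le_one[of \<theta>] by linarith
  then have "s \<le> r" unfolding s_def using powr_mono'[of 1 n r] assms by simp
  have "r \<le> c" using assms c by simp
  have "0 \<le> (r - s) * (2 * c - r - s)" using \<open>s \<le> r\<close> \<open>r \<le> c\<close> by simp
  have "r\<^sup>2 - 2 * r * c \<le> s\<^sup>2 - 2 * s * cos (n * \<phi>) \<and>
        (1 < n \<longrightarrow> r < 1 \<longrightarrow> r\<^sup>2 - 2 * r * c < s\<^sup>2 - 2 * s * cos (n * \<phi>))"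
  proof (cases "cos (n * \<phi>) \<le> c")
    case True
    have "0 \<le> 2 * s * (c - cos (n * \<phi>))" using True unfolding s_def by simp
    moreover have "0 < (r - s) * (2 * c - r - s)" if "1 < n" "r < 1"
    proof -
      have "s < r" unfolding s_def using powr_less_mono'[of r 1 n] assms that by simp
      then show ?thesis using \<open>r \<le> c\<close> by simp
    qed
    ultimately show ?thesis
      using polar_gap_decomposition[of s "cos (n * \<phi>)" r c] \<open>0 \<le> (r - s) * (2 * c - r - s)\<close> by auto
  next
    case False
    then show ?thesis using polar_gap_of_cos_mult_gt[of r \<phi> n] assms \<open>r \<le> c\<close> \<open>\<phi> < pi/2\<close>
      unfolding s_def c_def \<phi>_def by simp
  qed
  then show "r\<^sup>2 - 2 * r * cos \<theta> \<le> (r powr n)\<^sup>2 - 2 * r powr n * cos (n * \<theta>)"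
    and "1 < n \<Longrightarrow> r < 1 \<Longrightarrow> r\<^sup>2 - 2 * r * cos \<theta> < (r powr n)\<^sup>2 - 2 * r powr n * cos (n * \<theta>)"
    unfolding s_def c cn by auto
qed

lemma cmod_diff_one_power2: "(cmod (w - 1))\<^sup>2 = (cmod w)\<^sup>2 - 2 * Re w + 1"
  by (simp only: cmod_power2) (simp add: power2_eq_square algebra_simps)

lemma powr_of_real_polar:
  fixes z :: complex and n :: real
  assumes "z \<noteq> 0"
  shows "cmod (z powr of_real n) = cmod z powr n"
    and "Re (z powr of_real n) = cmod z powr n * cos (n * Arg z)"
  using assms by (simp_all add: powr_def Re_exp Arg_eq_Im_Ln)

lemma closed_disk_half_iff: "cmod (z - 1/2) \<le> 1/2 \<longleftrightarrow> (cmod z)\<^sup>2 \<le> Re z"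
proof -
  have "(cmod (z - 1/2))\<^sup>2 = (cmod z)\<^sup>2 - Re z + 1/4"
    by (simp only: cmod_power2) (simp add: power2_eq_square algebra_simps)
  moreover have "cmod (z - 1/2) \<le> 1/2 \<longleftrightarrow> (cmod (z - 1/2))\<^sup>2 \<le> 1/4"
    using power2_le_iff_abs_le[of "1/2" "cmod (z - 1/2)"] by (simp add: power_divide)
  ultimately show ?thesis by linarith
qed

lemma cmod_powr_diff_one:
  fixes z :: complex and n :: real
  assumes "z \<noteq> 0" "cmod (z - 1/2) \<le> 1/2" "1 \<le> n"
  shows "cmod (z - 1) \<le> cmod (z powr of_real n - 1)"
    and "1 < n \<Longrightarrow> z \<noteq> 1 \<Longrightarrow> cmod (z - 1) < cmod (z powr of_real n - 1)"
proof -
  define r where "r = cmod z"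
  define \<theta> where "\<theta> = Arg z"
  have Re_z: "Re z = r * cos \<theta>" unfolding r_def \<theta>_def using cos_Arg[OF assms(1)] assms by simp
  have "0 < r" unfolding r_def using assms by simp
  have "r\<^sup>2 \<le> Re z" using assms closed_disk_half_iff unfolding r_def by blast
  then have "r \<le> cos \<theta>" using \<open>0 < r\<close> Re_z by (simp add: power2_eq_square)
  have "\<bar>\<theta>\<bar> \<le> pi" unfolding \<theta>_def using Arg_le_pi[of z] mpi_less_Arg[of z] by (simp add: abs_le_iff)
  have sq_powr: "(cmod (z powr of_real n - 1))\<^sup>2 = (r powr n)\<^sup>2 - 2 * r powr n * cos (n * \<theta>) + 1"
    unfolding cmod_diff_one_power2 powr_of_real_polar[OF assms(1)] r_def \<theta>_def by (simp only: mult.assoc)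
  have sq: "(cmod (z - 1))\<^sup>2 = r\<^sup>2 - 2 * r * cos \<theta> + 1"
    unfolding cmod_diff_one_power2 Re_z r_def by simp
  note gap = polar_gap[OF \<open>0 < r\<close> \<open>r \<le> cos \<theta>\<close> \<open>\<bar>\<theta>\<bar> \<le> pi\<close> \<open>1 \<le> n\<close>]
  have "(cmod (z - 1))\<^sup>2 \<le> (cmod (z powr of_real n - 1))\<^sup>2"
    unfolding sq sq_powr using gap(1) by linarith
  then show "cmod (z - 1) \<le> cmod (z powr of_real n - 1)" by (rule power2_le_imp_le) simp
  assume "1 < n" "z \<noteq> 1"
  have "r < 1"
  proof (rule ccontr)
    assume "\<not> r < 1"
    then have "1 \<le> r\<^sup>2" by (simp add: one_le_power)
    then have "(cmod (z - 1))\<^sup>2 \<le> 0" using \<open>r\<^sup>2 \<le> Re z\<close> unfolding cmod_diff_one_power2 r_def by linarith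
    then show False using \<open>z \<noteq> 1\<close> by simp
  qed
  have "(cmod (z - 1))\<^sup>2 < (cmod (z powr of_real n - 1))\<^sup>2"
    unfolding sq sq_powr using gap(2)[OF \<open>1 < n\<close> \<open>r < 1\<close>] by linarith
  then show "cmod (z - 1) < cmod (z powr of_real n - 1)" by (rule power2_less_imp_less) simp
qed

theorem mainTheorem1:
  fixes n :: real
  assumes "n \<ge> 1"
  shows "(\<forall>z::complex. cmod (z - 1/2) \<le> 1/2 \<longrightarrow>
            cmod (z powr (of_real n) - 1) \<ge> cmod (z - 1))
       \<and> (n > 1 \<longrightarrow> (\<forall>z::complex. cmod (z - 1/2) \<le> 1/2 \<and> z \<noteq> 0 \<and> z \<noteq> 1 \<longrightarrow>
            cmod (z powr (of_real n) - 1) > cmod (z - 1)))"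
proof (intro conjI allI impI)
  fix z :: complex
  assume disk: "cmod (z - 1/2) \<le> 1/2"
  show "cmod (z powr of_real n - 1) \<ge> cmod (z - 1)"
  proof (cases "z = 0")
    case True
    then show ?thesis by simp
  next
    case False
    then show ?thesis using cmod_powr_diff_one(1)[OF False disk assms] by simp
  qed
next
  fix z :: complex
  assume "n > 1" "cmod (z - 1/2) \<le> 1/2 \<and> z \<noteq> 0 \<and> z \<noteq> 1"
  then show "cmod (z powr of_real n - 1) > cmod (z - 1)"
    using cmod_powr_diff_one(2) assms by blast
qed

end
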